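(* For all integers $N\ge1$ and $d\ge1$, $\mathcal{Q}_{N,1}^d\subseteq\mathcal{Q}_{N,1}^{N+1}$.
   Context: $\mathcal{Q}_{N,1}^d$ is the set of behaviors $(P(a|\mathbf{x}))_{a\in\{0,1\},\mathbf{x}\in\{0,1\}^N}$ of the form $P(a|\mathbf{x})=\mathrm{Tr}[\Pi_aU_{\mathbf{x}}\rho U_{\mathbf{x}}^\dagger]$, where $\rho$ is a density operator on $\mathbb{C}^N\otimes\mathbb{C}^d$ (independent of $\mathbf{x}$), $U_{\mathbf{x}}=\sum_{j=1}^N|j\rangle\langle j|\otimes U_j^{(x_j)}$ for arbitrary unitaries $U_j^{(0)},U_j^{(1)}$ on $\mathbb{C}^d$, $\{|j\rangle\}$ is the standard basis of $\mathbb{C}^N$, and $\{\Pi_0,\Pi_1\}$ is an arbitrary two-outcome POVM on $\mathbb{C}^N\otimes\mathbb{C}^d$. *)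

theory Defs
  imports "Jordan_Normal_Form.Matrix"
begin

text \<open>Complex matrices are Jordan_Normal_Form matrices of type complex mat.
  The space C^N (x) C^d is identified with C^(N*d) via |j> (x) |k>  ~  basis vector j*d+k
  (j < N, k < d).\<close>

definition cadj :: "complex mat \<Rightarrow> complex mat" where
  "cadj A = mat (dim_col A) (dim_row A) (\<lambda>(i,j). cnj (A $$ (j,i)))"

definition ctrace :: "complex mat \<Rightarrow> complex" where
  "ctrace A = (\<Sum>i<dim_row A. A $$ (i,i))"

definition psd_mat :: "nat \<Rightarrow> complex mat \<Rightarrow> bool" where
  "psd_mat n A \<longleftrightarrow> A \<in> carrier_mat n n \<and>
     (\<forall>v \<in> carrier_vec n. let z = (\<Sum>i<n. cnj (v $ i) * (A *\<^sub>v v) $ i) in Im z = 0 \<and> Re z \<ge> 0)"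

definition density_op :: "nat \<Rightarrow> complex mat \<Rightarrow> bool" where
  "density_op n \<rho> \<longleftrightarrow> psd_mat n \<rho> \<and> ctrace \<rho> = 1"

definition unitary_mat :: "nat \<Rightarrow> complex mat \<Rightarrow> bool" where
  "unitary_mat n U \<longleftrightarrow> U \<in> carrier_mat n n \<and> U * cadj U = 1\<^sub>m n \<and> cadj U * U = 1\<^sub>m n"

definition povm2 :: "nat \<Rightarrow> (bool \<Rightarrow> complex mat) \<Rightarrow> bool" where
  "povm2 n Pm \<longleftrightarrow> psd_mat n (Pm False) \<and> psd_mat n (Pm True) \<and> Pm False + Pm True = 1\<^sub>m n"

text \<open>U_x = sum_j |j><j| (x) U_j^(x_j), as an (N*d)x(N*d) block-diagonal matrix.
  U j b is U_j^(b) (b = False for 0, True for 1).\<close>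
definition ctrl_unitary :: "nat \<Rightarrow> nat \<Rightarrow> (nat \<Rightarrow> bool \<Rightarrow> complex mat) \<Rightarrow> (nat \<Rightarrow> bool) \<Rightarrow> complex mat" where
  "ctrl_unitary N d U x = mat (N*d) (N*d)
     (\<lambda>(r,c). if r div d = c div d then U (r div d) (x (r div d)) $$ (r mod d, c mod d) else 0)"

text \<open>Behaviours: a \<in> {0,1} encoded as bool, x \<in> {0,1}^N as nat \<Rightarrow> bool (only x 0..x (N-1) matter).\<close>
definition Q_set :: "nat \<Rightarrow> nat \<Rightarrow> (bool \<Rightarrow> (nat \<Rightarrow> bool) \<Rightarrow> complex) set" where
  "Q_set N d = {P. \<exists>\<rho> U Pm. density_op (N*d) \<rho> \<and>
       (\<forall>j<N. \<forall>b. unitary_mat d (U j b)) \<and> povm2 (N*d) Pm \<and>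
       (\<forall>a x. P a x = ctrace (Pm a * ctrl_unitary N d U x * \<rho> * cadj (ctrl_unitary N d U x)))}"

end

theory Submission
  imports Defs "Jordan_Normal_Form.Determinant"
begin

(*
  Factor rho = sum_k w_k w_k^* and purify it by sum_k w_k (x) |k>.  After the controlled
  unitary U_x, the j-th block of the purified state is U_j^(x_j) applied to the j-th block of
  the purification; since U_j^(0) and U_j^(1) are unitary, its two possible values have the
  same norm and lie in a plane with an orthonormal frame e_j0, e_j1.  So one qubit per branch
  suffices: start in sum_j |block_j| |j,0>, let the new U_j^(b) rotate |0> to the coordinates
  of the block in that frame, and measure the POVM pulled back along the isometry
  |j,c> |-> |j> (x) e_jc, completed by the identity on the unused levels.  Every local
  dimension >= 2, in particular N + 1, leaves room for this.
*)

lemma block_index_less: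
  fixes j s d :: nat
  assumes "j < N" "s < d"
  shows "j * d + s < N * d"
proof -
  have "j * d + s < (j + 1) * d" using assms by simp
  also have "\<dots> \<le> N * d" using assms by (intro mult_right_mono) auto
  finally show ?thesis .
qed

lemma block_index_eq_iff:
  fixes d :: nat
  assumes "s < d" "s' < d"
  shows "j * d + s = j' * d + s' \<longleftrightarrow> j = j' \<and> s = s'"
proof
  assume eq: "j * d + s = j' * d + s'"
  have "j = j'" using arg_cong[OF eq, of "\<lambda>r. r div d"] assms by simp
  with eq show "j = j' \<and> s = s'" by simp
qed auto

lemma nat_eq_iff_div_mod:
  fixes p q d :: nat
  shows "p = q \<longleftrightarrow> p div d = q div d \<and> p mod d = q mod d"
  by (metis div_mult_mod_eq)

lemma sum_blocks:
  fixes f :: "nat \<Rightarrow> 'a::comm_monoid_add"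
  assumes "0 < d"
  shows "(\<Sum>r<N * d. f r) = (\<Sum>j<N. \<Sum>s<d. f (j * d + s))"
proof -
  have "(\<Sum>j<N. \<Sum>s<d. f (j * d + s)) = (\<Sum>(j, s)\<in>{..<N} \<times> {..<d}. f (j * d + s))"
    by (simp add: sum.cartesian_product)
  also have "\<dots> = (\<Sum>r<N * d. f r)"
    by (rule sum.reindex_bij_witness[where i = "\<lambda>r. (r div d, r mod d)" and j = "\<lambda>(j, s). j * d + s"])
      (use assms in \<open>auto simp: less_mult_imp_div_less block_index_less\<close>)
  finally show ?thesis by simp
qed

lemma sum_lessThan_vanishing_tail:
  fixes f :: "nat \<Rightarrow> 'a::comm_monoid_add"
  assumes "m \<le> n" "\<And>c. m \<le> c \<Longrightarrow> c < n \<Longrightarrow> f c = 0"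
  shows "(\<Sum>c<n. f c) = (\<Sum>c<m. f c)"
  by (rule sum.mono_neutral_right) (use assms in auto)

lemma sum_lessThan_mult_delta:
  fixes f :: "nat \<Rightarrow> 'a::semiring_0"
  assumes "p < n"
  shows "(\<Sum>j<n. f j * (if j = p then x else 0)) = f p * x"
proof -
  have "(\<Sum>j<n. f j * (if j = p then x else 0)) = (\<Sum>j<n. if j = p then f p * x else 0)"
    by (rule sum.cong) auto
  then show ?thesis using assms by simp
qed

lemma sum_block_pairs_restrict:
  fixes F :: "nat \<Rightarrow> nat \<Rightarrow> nat \<Rightarrow> nat \<Rightarrow> 'a::comm_monoid_add"
  assumes "m \<le> D"
    and "\<And>j c j' c'. j < N \<Longrightarrow> j' < N \<Longrightarrow> c < D \<Longrightarrow> c' < D \<Longrightarrow> m \<le> c \<or> m \<le> c' \<Longrightarrow> F j c j' c' = 0"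
  shows "(\<Sum>j<N. \<Sum>c<D. \<Sum>j'<N. \<Sum>c'<D. F j c j' c') = (\<Sum>j<N. \<Sum>c<m. \<Sum>j'<N. \<Sum>c'<m. F j c j' c')"
proof (rule sum.cong[OF refl])
  fix j assume "j \<in> {..<N}"
  have inner: "(\<Sum>c'<D. F j c j' c') = (\<Sum>c'<m. F j c j' c')" if "c < D" "j' < N" for c j'
    by (intro sum_lessThan_vanishing_tail) (use assms that \<open>j \<in> {..<N}\<close> in auto)
  have "(\<Sum>c<D. \<Sum>j'<N. \<Sum>c'<D. F j c j' c') = (\<Sum>c<D. \<Sum>j'<N. \<Sum>c'<m. F j c j' c')"
    by (auto intro!: sum.cong simp: inner)
  also have "\<dots> = (\<Sum>c<m. \<Sum>j'<N. \<Sum>c'<m. F j c j' c')"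
    using \<open>j \<in> {..<N}\<close> by (intro sum_lessThan_vanishing_tail) (use assms in auto)
  finally show "(\<Sum>c<D. \<Sum>j'<N. \<Sum>c'<D. F j c j' c') = (\<Sum>c<m. \<Sum>j'<N. \<Sum>c'<m. F j c j' c')" .
qed

lemma sum_two: "(\<Sum>c<2. f c) = f 0 + f (1::nat)"
  by (simp add: numeral_2_eq_2)

lemma less_two_cases: "(c::nat) < 2 \<Longrightarrow> c = 0 \<or> c = 1"
  by auto

lemma cnj_mult_self: "cnj z * z = complex_of_real ((cmod z)\<^sup>2)"
  using complex_norm_square[of z] by (simp add: mult.commute)

lemma nonneg_real_sum:
  assumes "\<And>i. i \<in> A \<Longrightarrow> Im (f i) = 0 \<and> Re (f i) \<ge> 0"
  shows "Im (sum f A) = 0 \<and> Re (sum f A) \<ge> 0"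
  using assms by (simp add: Im_sum Re_sum sum_nonneg)

section \<open>Quadratic forms and Gram factorisation\<close>

definition quad_form :: "nat \<Rightarrow> (nat \<Rightarrow> nat \<Rightarrow> complex) \<Rightarrow> (nat \<Rightarrow> complex) \<Rightarrow> complex" where
  "quad_form n A v = (\<Sum>i<n. \<Sum>j<n. cnj (v i) * A i j * v j)"

definition psd_form :: "nat \<Rightarrow> (nat \<Rightarrow> nat \<Rightarrow> complex) \<Rightarrow> bool" where
  "psd_form n A \<longleftrightarrow> (\<forall>v. Im (quad_form n A v) = 0 \<and> Re (quad_form n A v) \<ge> 0)"

lemma quad_form_cong:
  assumes "\<And>i j. i < n \<Longrightarrow> j < n \<Longrightarrow> A i j = B i j" "\<And>i. i < n \<Longrightarrow> v i = u i"
  shows "quad_form n A v = quad_form n B u"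
  unfolding quad_form_def using assms by (intro sum.cong refl) auto

lemma quad_form_add: "quad_form n (\<lambda>i j. A i j + B i j) v = quad_form n A v + quad_form n B v"
  unfolding quad_form_def by (simp add: distrib_left distrib_right sum.distrib)

lemma quad_form_rank_one:
  "quad_form n (\<lambda>i j. g i * cnj (g j)) v = (\<Sum>i<n. cnj (v i) * g i) * cnj (\<Sum>i<n. cnj (v i) * g i)"
  unfolding quad_form_def by (simp add: sum_product mult_ac)

lemma quad_form_diff_rank_one:
  "quad_form n (\<lambda>i j. A i j - g i * cnj (g j)) v
     = quad_form n A v - (\<Sum>i<n. cnj (v i) * g i) * cnj (\<Sum>i<n. cnj (v i) * g i)"
  unfolding quad_form_rank_one[symmetric] quad_form_def
  by (simp add: sum_subtractf right_diff_distrib left_diff_distrib)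

lemma quad_form_blocks:
  assumes "0 < d"
  shows "quad_form (N * d) A v
    = (\<Sum>j<N. \<Sum>s<d. \<Sum>j'<N. \<Sum>s'<d. cnj (v (j * d + s)) * A (j * d + s) (j' * d + s') * v (j' * d + s'))"
  unfolding quad_form_def by (simp add: sum_blocks[OF assms])

lemma quad_form_update_outside:
  assumes "\<And>j. j < n \<Longrightarrow> A m j = 0" "\<And>i. i < n \<Longrightarrow> A i m = 0"
  shows "quad_form n A (v(m := t)) = quad_form n A v"
  unfolding quad_form_def by (intro sum.cong refl) (use assms in auto)

lemma quad_form_one_point:
  assumes "p < n"
  shows "quad_form n A (\<lambda>i. if i = p then x else 0) = cnj x * A p p * x"
proof -
  have "quad_form n A (\<lambda>i. if i = p then x else 0) = (\<Sum>i<n. (A i p * x) * (if i = p then cnj x else 0))"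
    unfolding quad_form_def by (intro sum.cong refl, subst sum_lessThan_mult_delta[OF assms]) auto
  also have "\<dots> = cnj x * A p p * x" by (subst sum_lessThan_mult_delta[OF assms]) simp
  finally show ?thesis .
qed

lemma quad_form_two_points:
  assumes "p < n" "q < n" "p \<noteq> q"
  shows "quad_form n A (\<lambda>i. if i = p then x else if i = q then y else 0)
     = cnj x * (A p p * x + A p q * y) + cnj y * (A q p * x + A q q * y)"
proof -
  have pts: "(\<Sum>i<n. (if i = p then a else if i = q then b else 0) * f i) = a * f p + b * f q"
    for a b :: complex and f
  proof -
    have "(\<Sum>i<n. (if i = p then a else if i = q then b else 0) * f i)
        = (\<Sum>i<n. (if i = p then a * f p else 0) + (if i = q then b * f q else 0))"
      by (rule sum.cong) (use assms in auto)
    also have "\<dots> = a * f p + b * f q" using assms by (simp add: sum.distrib)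
    finally show ?thesis .
  qed
  have "quad_form n A (\<lambda>i. if i = p then x else if i = q then y else 0)
      = (\<Sum>i<n. (if i = p then cnj x else if i = q then cnj y else 0)
                * (\<Sum>j<n. (if j = p then x else if j = q then y else 0) * A i j))"
    unfolding quad_form_def sum_distrib_left by (intro sum.cong refl) (auto simp: mult_ac)
  also have "\<dots> = cnj x * (x * A p p + y * A p q) + cnj y * (x * A q p + y * A q q)"
    by (simp only: pts)
  finally show ?thesis by (simp add: mult_ac)
qed

lemma psd_mat_iff_psd_form:
  assumes "A \<in> carrier_mat n n"
  shows "psd_mat n A \<longleftrightarrow> psd_form n (\<lambda>i j. A $$ (i, j))"
proof -
  have form: "(\<Sum>i<n. cnj (v $ i) * (A *\<^sub>v v) $ i) = quad_form n (\<lambda>i j. A $$ (i, j)) (($) v)"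
    if "v \<in> carrier_vec n" for v
    unfolding quad_form_def using assms that
    by (intro sum.cong refl) (auto simp: scalar_prod_def atLeast0LessThan sum_distrib_left mult_ac)
  have restrict: "quad_form n (\<lambda>i j. A $$ (i, j)) f = quad_form n (\<lambda>i j. A $$ (i, j)) (($) (vec n f))" for f
    by (rule quad_form_cong) auto
  show ?thesis
  proof
    assume psd: "psd_mat n A"
    show "psd_form n (\<lambda>i j. A $$ (i, j))"
      unfolding psd_form_def
    proof
      fix f
      have "let z = \<Sum>i<n. cnj (vec n f $ i) * (A *\<^sub>v vec n f) $ i in Im z = 0 \<and> 0 \<le> Re z"
        using psd[unfolded psd_mat_def, THEN conjunct2, rule_format, OF vec_carrier] .
      then show "Im (quad_form n (\<lambda>i j. A $$ (i, j)) f) = 0 \<and> 0 \<le> Re (quad_form n (\<lambda>i j. A $$ (i, j)) f)"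
        unfolding Let_def form[OF vec_carrier] restrict[symmetric] .
    qed
  next
    assume psd: "psd_form n (\<lambda>i j. A $$ (i, j))"
    show "psd_mat n A"
      unfolding psd_mat_def Let_def
    proof (intro conjI[OF assms] ballI)
      fix v :: "complex vec" assume "v \<in> carrier_vec n"
      then show "Im (\<Sum>i<n. cnj (v $ i) * (A *\<^sub>v v) $ i) = 0 \<and> 0 \<le> Re (\<Sum>i<n. cnj (v $ i) * (A *\<^sub>v v) $ i)"
        unfolding form[OF \<open>v \<in> carrier_vec n\<close>] using psd unfolding psd_form_def by blast
    qed
  qed
qed

lemma psd_form_diag:
  assumes "psd_form n A" "p < n"
  shows "Im (A p p) = 0" "Re (A p p) \<ge> 0"
  using assms(1)[unfolded psd_form_def, rule_format, of "\<lambda>i. if i = p then 1 else 0"]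
  by (auto simp: quad_form_one_point[OF assms(2)])

lemma psd_form_hermitian:
  assumes "psd_form n A" "p < n" "q < n"
  shows "A q p = cnj (A p q)"
proof (cases "p = q")
  case True
  then show ?thesis using psd_form_diag[OF assms(1,2)] by (simp add: complex_eq_iff)
next
  case False
  have real_sum: "Im (A p p + A p q + A q p + A q q) = 0"
    using assms(1)[unfolded psd_form_def, rule_format, of "\<lambda>i. if i = p then 1 else if i = q then 1 else 0"]
    by (simp add: quad_form_two_points[OF assms(2,3) False] algebra_simps)
  have real_twisted_sum: "Im (A p p + \<i> * A p q - \<i> * A q p + A q q) = 0"
    using assms(1)[unfolded psd_form_def, rule_format, of "\<lambda>i. if i = p then 1 else if i = q then \<i> else 0"]
    by (simp add: quad_form_two_points[OF assms(2,3) False] algebra_simps)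
  show ?thesis
    using real_sum real_twisted_sum psd_form_diag[OF assms(1,2)] psd_form_diag[OF assms(1,3)]
    by (simp add: complex_eq_iff)
qed

lemma psd_form_zero_diag_row:
  assumes "psd_form n A" "m < n" "j < n" "A m m = 0"
  shows "A m j = 0"
proof (rule ccontr)
  assume nz: "A m j \<noteq> 0"
  then have jm: "j \<noteq> m" using assms(4) by auto
  define a where "a = A m j"
  define h where "h = Re (A j j)"
  define q where "q = (cmod a)\<^sup>2"
  have q_pos: "q > 0" using nz unfolding q_def a_def by simp
  have h_nonneg: "h \<ge> 0" using psd_form_diag[OF assms(1,3)] h_def by simp
  have Ajj: "A j j = of_real h" using psd_form_diag[OF assms(1,3)] h_def by (simp add: complex_eq_iff)
  have Ajm: "A j m = cnj a" using psd_form_hermitian[OF assms(1,2,3)] a_def by simp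
  have aa: "cnj a * a = of_real q" unfolding q_def by (rule cnj_mult_self)
  \<comment> \<open>Along the test vector \<open>x e\<^sub>m - e\<^sub>j\<close> the form is \<open>h - 2 Re (cnj x * a)\<close>, which is negative for \<open>x\<close> a large multiple of \<open>a\<close>.\<close>
  define x where "x = complex_of_real ((h + 1) / q) * a"
  let ?v = "\<lambda>i. if i = m then x else if i = j then -1 else 0"
  have "quad_form n A ?v = cnj x * (A m m * x + A m j * (-1)) + cnj (-1) * (A j m * x + A j j * (-1))"
    by (rule quad_form_two_points[OF assms(2,3) jm[symmetric]])
  also have "\<dots> = - 2 * (complex_of_real ((h + 1) / q) * (cnj a * a)) + A j j"
    using assms(4) unfolding Ajm a_def[symmetric] x_def by (simp add: algebra_simps)
  also have "\<dots> = - 2 * complex_of_real (h + 1) + of_real h"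
    unfolding aa Ajj using q_pos by (simp add: of_real_mult[symmetric] del: of_real_mult)
  finally have "Re (quad_form n A ?v) = - h - 2" by simp
  moreover have "Re (quad_form n A ?v) \<ge> 0" using assms(1) unfolding psd_form_def by blast
  ultimately show False using h_nonneg by simp
qed

lemma psd_form_zero_diag:
  assumes "psd_form n A" "m < n" "j < n" "A m m = 0"
  shows "A m j = 0" "A j m = 0"
  using psd_form_zero_diag_row[OF assms] psd_form_hermitian[OF assms(1,2,3)] by simp_all

lemma psd_form_pivot_column:
  assumes psd: "psd_form n A" and m: "m < n" and pivot: "A m m \<noteq> 0"
    and g: "\<And>i. g i = A i m / of_real (sqrt (Re (A m m)))"
  shows "0 < Re (A m m)" and "g m = of_real (sqrt (Re (A m m)))"
    and "\<And>j. j < n \<Longrightarrow> A m j = g m * cnj (g j)" and "\<And>i. A i m = g i * cnj (g m)"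
proof -
  define c where "c = Re (A m m)"
  have Amm: "A m m = of_real c" using psd_form_diag[OF psd m] c_def by (simp add: complex_eq_iff)
  have c_pos: "0 < c"
  proof -
    have "0 \<le> c" using psd_form_diag[OF psd m] c_def by simp
    moreover have "c \<noteq> 0" using pivot Amm by auto
    ultimately show ?thesis by simp
  qed
  then show "0 < Re (A m m)" by (simp add: c_def)
  have g_c: "g i = A i m / of_real (sqrt c)" for i by (simp add: g c_def)
  have "of_real c / of_real (sqrt c) = (of_real (sqrt c) :: complex)"
    using c_pos by (simp add: real_div_sqrt flip: of_real_divide)
  then have gm: "g m = of_real (sqrt c)" unfolding g_c Amm .
  then show "g m = of_real (sqrt (Re (A m m)))" by (simp add: c_def)
  show "A m j = g m * cnj (g j)" if "j < n" for j
  proof -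
    have "cnj (g j) = A m j / of_real (sqrt c)"
      unfolding g_c using psd_form_hermitian[OF psd m that] by simp
    then show ?thesis unfolding gm using c_pos by simp
  qed
  show "A i m = g i * cnj (g m)" for i
    using c_pos by (simp add: gm g_c[of i])
qed

lemma psd_form_schur_complement:
  assumes psd: "psd_form n A" and m: "m < n" and pivot: "A m m \<noteq> 0"
    and g: "\<And>i. g i = A i m / of_real (sqrt (Re (A m m)))"
  shows "psd_form n (\<lambda>i j. A i j - g i * cnj (g j))"
  unfolding psd_form_def
proof
  fix v
  note pivot_column = psd_form_pivot_column[OF psd m pivot g]
  \<comment> \<open>Shifting \<open>v\<close> along \<open>e\<^sub>m\<close> does not change the form of the complement and makes \<open>v\<close> orthogonal to \<open>g\<close>.\<close>
  define z where "z = (\<Sum>i<n. cnj (v i) * g i)"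
  define t where "t = - cnj z / g m"
  define v' where "v' = v(m := v m + t)"
  have "(\<Sum>i<n. cnj (v' i) * g i) = (\<Sum>i<n. cnj (v i) * g i + (if i = m then cnj t * g m else 0))"
    unfolding v'_def by (rule sum.cong) (auto simp: distrib_right)
  also have "\<dots> = z + cnj t * g m" using m by (simp add: sum.distrib z_def)
  also have "\<dots> = 0" unfolding t_def using pivot_column(1,2) by simp
  finally have "quad_form n (\<lambda>i j. A i j - g i * cnj (g j)) v' = quad_form n A v'"
    unfolding quad_form_diff_rank_one by simp
  moreover have "quad_form n (\<lambda>i j. A i j - g i * cnj (g j)) v' = quad_form n (\<lambda>i j. A i j - g i * cnj (g j)) v"
    unfolding v'_def by (rule quad_form_update_outside) (use pivot_column(3,4) in auto)
  ultimately show "Im (quad_form n (\<lambda>i j. A i j - g i * cnj (g j)) v) = 0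
      \<and> 0 \<le> Re (quad_form n (\<lambda>i j. A i j - g i * cnj (g j)) v)"
    using psd unfolding psd_form_def by metis
qed

lemma psd_form_gram_factor_aux:
  assumes "psd_form n A" "m \<le> n" "\<And>i j. i < n \<Longrightarrow> j < n \<Longrightarrow> m \<le> i \<or> m \<le> j \<Longrightarrow> A i j = 0"
  shows "\<exists>w. \<forall>i<n. \<forall>j<n. A i j = (\<Sum>k<m. w k i * cnj (w k j))"
  using assms
proof (induction m arbitrary: A)
  case 0
  then show ?case by auto
next
  case (Suc m)
  have m: "m < n" using Suc.prems by simp
  show ?case
  proof (cases "A m m = 0")
    case True
    have outside: "A i j = 0" if ij: "i < n" "j < n" and "m \<le> i \<or> m \<le> j" for i j
      using psd_form_zero_diag[OF Suc.prems(1) m _ True] Suc.prems(3)[OF ij] ij that(3)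
      by (cases "i = m \<or> j = m") auto
    obtain w where "\<forall>i<n. \<forall>j<n. A i j = (\<Sum>k<m. w k i * cnj (w k j))"
      using Suc.IH[OF Suc.prems(1) _ outside] m by auto
    then show ?thesis by (intro exI[of _ "w(m := (\<lambda>_. 0))"]) simp
  next
    case False
    define g where "g i = A i m / of_real (sqrt (Re (A m m)))" for i
    note pivot_column = psd_form_pivot_column[OF Suc.prems(1) m False g_def]
    have outside: "A i j - g i * cnj (g j) = 0" if ij: "i < n" "j < n" and "m \<le> i \<or> m \<le> j" for i j
    proof (cases "i = m \<or> j = m")
      case True
      then show ?thesis using pivot_column(3,4) ij by auto
    next
      case False
      then have "A i j = 0" and "A i m = 0 \<or> A j m = 0" using Suc.prems(3) ij that(3) m by auto
      then show ?thesis unfolding g_def by auto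
    qed
    obtain w where w: "\<forall>i<n. \<forall>j<n. A i j - g i * cnj (g j) = (\<Sum>k<m. w k i * cnj (w k j))"
      using Suc.IH[OF psd_form_schur_complement[OF Suc.prems(1) m False g_def] _ outside] m by auto
    have "A i j = (\<Sum>k<Suc m. (w(m := g)) k i * cnj ((w(m := g)) k j))" if "i < n" "j < n" for i j
      using w[rule_format, OF that] by (simp add: diff_eq_eq)
    then show ?thesis by blast
  qed
qed

lemma psd_form_gram_factor:
  assumes "psd_form n A"
  shows "\<exists>w. \<forall>i<n. \<forall>j<n. A i j = (\<Sum>k<n. w k i * cnj (w k j))"
  by (rule psd_form_gram_factor_aux[OF assms order_refl]) auto

lemma index_mult_mat_sum:
  assumes "A \<in> carrier_mat n m" "B \<in> carrier_mat m p" "i < n" "j < p"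
  shows "(A * B) $$ (i, j) = (\<Sum>l<m. A $$ (i, l) * B $$ (l, j))"
  using assms by (simp add: scalar_prod_def atLeast0LessThan)

lemma cadj_carrier_mat: "A \<in> carrier_mat n m \<Longrightarrow> cadj A \<in> carrier_mat m n"
  unfolding cadj_def by auto

lemma index_cadj: "A \<in> carrier_mat n m \<Longrightarrow> i < m \<Longrightarrow> j < n \<Longrightarrow> cadj A $$ (i, j) = cnj (A $$ (j, i))"
  unfolding cadj_def by auto

lemma unitary_matI:
  assumes "V \<in> carrier_mat n n" "V * cadj V = 1\<^sub>m n"
  shows "unitary_mat n V"
  using assms mat_mult_left_right_inverse[OF assms(1) cadj_carrier_mat[OF assms(1)]]
  unfolding unitary_mat_def by blast

lemma ctrace_sandwich_gram:
  assumes P: "P \<in> carrier_mat n n" and V: "V \<in> carrier_mat n n" and R: "R \<in> carrier_mat n n"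
    and R_gram: "\<And>r r'. r < n \<Longrightarrow> r' < n \<Longrightarrow> R $$ (r, r') = (\<Sum>k\<in>K. w k r * cnj (w k r'))"
  shows "ctrace (P * V * R * cadj V)
    = (\<Sum>k\<in>K. quad_form n (\<lambda>i j. P $$ (i, j)) (\<lambda>r. \<Sum>c<n. V $$ (r, c) * w k c))"
proof -
  have PV: "P * V \<in> carrier_mat n n" and PVR: "P * V * R \<in> carrier_mat n n"
    and V': "cadj V \<in> carrier_mat n n"
    using P V R cadj_carrier_mat[OF V] by auto
  have "ctrace (P * V * R * cadj V) = (\<Sum>i<n. (P * V * R * cadj V) $$ (i, i))"
    unfolding ctrace_def using P by simp
  also have "\<dots> = (\<Sum>i<n. \<Sum>m<n. \<Sum>l<n. \<Sum>a<n. \<Sum>k\<in>K.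
      P $$ (i, a) * V $$ (a, l) * (w k l * cnj (w k m)) * cnj (V $$ (i, m)))"
  proof (intro sum.cong refl)
    fix i assume i: "i \<in> {..<n}"
    have PVR_entry: "(P * V * R) $$ (i, m) = (\<Sum>l<n. (\<Sum>a<n. P $$ (i, a) * V $$ (a, l)) * R $$ (l, m))"
      if "m < n" for m
      using i that by (simp add: index_mult_mat_sum[OF PV R] index_mult_mat_sum[OF P V])
    have "(P * V * R * cadj V) $$ (i, i) = (\<Sum>m<n. (P * V * R) $$ (i, m) * cadj V $$ (m, i))"
      using i by (simp add: index_mult_mat_sum[OF PVR V'])
    also have "\<dots> = (\<Sum>m<n. \<Sum>l<n. \<Sum>a<n. \<Sum>k\<in>K.
        P $$ (i, a) * V $$ (a, l) * (w k l * cnj (w k m)) * cnj (V $$ (i, m)))"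
      by (intro sum.cong refl)
        (use i in \<open>simp add: PVR_entry index_cadj[OF V] R_gram sum_distrib_left sum_distrib_right mult_ac\<close>)
    finally show "(P * V * R * cadj V) $$ (i, i) = (\<Sum>m<n. \<Sum>l<n. \<Sum>a<n. \<Sum>k\<in>K.
        P $$ (i, a) * V $$ (a, l) * (w k l * cnj (w k m)) * cnj (V $$ (i, m)))" .
  qed
  also have "\<dots> = (\<Sum>k\<in>K. \<Sum>i<n. \<Sum>a<n. \<Sum>m<n. \<Sum>l<n.
      cnj (V $$ (i, m)) * cnj (w k m) * P $$ (i, a) * (V $$ (a, l) * w k l))"
    by (simp add: sum.cartesian_product)
      (rule sum.reindex_bij_witness[where i = "\<lambda>(k, i, a, m, l). (i, m, l, a, k)"
          and j = "\<lambda>(i, m, l, a, k). (k, i, a, m, l)"]; auto simp: mult_ac)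
  also have "\<dots> = (\<Sum>k\<in>K. quad_form n (\<lambda>i j. P $$ (i, j)) (\<lambda>r. \<Sum>c<n. V $$ (r, c) * w k c))"
    unfolding quad_form_def by (simp add: sum_distrib_left sum_distrib_right mult_ac)
  finally show ?thesis .
qed

lemma sum_ctrl_unitary_row:
  assumes "j < N" "s < d"
  shows "(\<Sum>c<N * d. ctrl_unitary N d U x $$ (j * d + s, c) * f c) = (\<Sum>t<d. U j (x j) $$ (s, t) * f (j * d + t))"
proof -
  have "(\<Sum>c<N * d. ctrl_unitary N d U x $$ (j * d + s, c) * f c)
      = (\<Sum>j'<N. \<Sum>t<d. ctrl_unitary N d U x $$ (j * d + s, j' * d + t) * f (j' * d + t))"
    using assms by (intro sum_blocks) simp
  also have "\<dots> = (\<Sum>j'<N. if j' = j then (\<Sum>t<d. U j (x j) $$ (s, t) * f (j * d + t)) else 0)"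
    by (intro sum.cong refl) (use assms in \<open>auto simp: ctrl_unitary_def block_index_less\<close>)
  also have "\<dots> = (\<Sum>t<d. U j (x j) $$ (s, t) * f (j * d + t))" using assms by simp
  finally show ?thesis .
qed

lemma unitary_mat_norm_preserving:
  assumes "unitary_mat d V"
  shows "(\<Sum>s<d. cnj (\<Sum>t<d. V $$ (s, t) * f t) * (\<Sum>t<d. V $$ (s, t) * f t)) = (\<Sum>t<d. cnj (f t) * f t)"
proof -
  have V: "V \<in> carrier_mat d d" and VV: "cadj V * V = 1\<^sub>m d" using assms unfolding unitary_mat_def by auto
  have orth: "(\<Sum>s<d. cnj (V $$ (s, t)) * V $$ (s, t')) = (if t = t' then 1 else 0)"
    if "t < d" "t' < d" for t t'
  proof -
    have "(cadj V * V) $$ (t, t') = (\<Sum>s<d. cnj (V $$ (s, t)) * V $$ (s, t'))"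
      using that by (simp add: index_mult_mat_sum[OF cadj_carrier_mat[OF V] V] index_cadj[OF V])
    then show ?thesis using VV that by simp
  qed
  have "(\<Sum>s<d. cnj (\<Sum>t<d. V $$ (s, t) * f t) * (\<Sum>t<d. V $$ (s, t) * f t))
     = (\<Sum>s<d. \<Sum>t<d. \<Sum>t'<d. cnj (f t) * f t' * (cnj (V $$ (s, t)) * V $$ (s, t')))"
    by (simp add: sum_distrib_left sum_distrib_right mult_ac)
  also have "\<dots> = (\<Sum>t<d. \<Sum>t'<d. \<Sum>s<d. cnj (f t) * f t' * (cnj (V $$ (s, t)) * V $$ (s, t')))"
    by (subst sum.swap, subst (2) sum.swap) (rule refl)
  also have "\<dots> = (\<Sum>t<d. \<Sum>t'<d. cnj (f t) * f t' * (if t = t' then 1 else 0))"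
    by (intro sum.cong refl) (simp add: sum_distrib_left[symmetric] orth)
  also have "\<dots> = (\<Sum>t<d. cnj (f t) * f t)"
    by (intro sum.cong refl) (simp add: if_distrib cong: if_cong)
  finally show ?thesis .
qed

lemma unitary_mat_block_2x2:
  assumes D: "2 \<le> D"
    and G: "\<And>c c'. c < 2 \<Longrightarrow> c' < 2 \<Longrightarrow> (\<Sum>e<2. G c e * cnj (G c' e)) = (if c = c' then 1 else 0)"
  shows "unitary_mat D (mat D D (\<lambda>(c, c'). if c < 2 \<and> c' < 2 then G c c' else if c = c' then 1 else 0))"
    (is "unitary_mat D ?V")
proof -
  define v where "v c c' = (if c < 2 \<and> c' < 2 then G c c' else if c = c' then 1 else 0)" for c c' :: nat
  have rows: "(\<Sum>e<D. v c e * cnj (v c' e)) = (if c = c' then 1 else 0)" if "c < D" "c' < D" for c c'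
  proof (cases "c < 2 \<and> c' < 2")
    case True
    have "(\<Sum>e<D. v c e * cnj (v c' e)) = (\<Sum>e<2. G c e * cnj (G c' e))"
      using D True by (subst sum_lessThan_vanishing_tail[OF D]) (auto simp: v_def)
    then show ?thesis using G True by simp
  next
    case False
    then consider "2 \<le> c" | "c < 2" "2 \<le> c'" by linarith
    then show ?thesis
    proof cases
      case 1
      then have "(\<Sum>e<D. v c e * cnj (v c' e)) = (\<Sum>e<D. if e = c then cnj (v c' e) else 0)"
        by (intro sum.cong) (auto simp: v_def)
      then show ?thesis using that 1 by (auto simp: v_def)
    next
      case 2
      then have "(\<Sum>e<D. v c e * cnj (v c' e)) = (\<Sum>e<D. if e = c' then v c e else 0)"
        by (intro sum.cong) (auto simp: v_def)
      then show ?thesis using that 2 by (auto simp: v_def)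
    qed
  qed
  have V: "?V \<in> carrier_mat D D" by simp
  have "?V * cadj ?V = 1\<^sub>m D"
  proof (rule eq_matI)
    fix c c' assume "c < dim_row (1\<^sub>m D)" "c' < dim_col (1\<^sub>m D)"
    then have "c < D" "c' < D" by auto
    then show "(?V * cadj ?V) $$ (c, c') = 1\<^sub>m D $$ (c, c')"
      using rows by (simp add: index_mult_mat_sum[OF V cadj_carrier_mat[OF V]] index_cadj[OF V] v_def)
  qed (use V cadj_carrier_mat[OF V] in auto)
  then show ?thesis by (rule unitary_matI[OF V])
qed

lemma unitary_mat_with_first_column:
  assumes D: "2 \<le> D" and unit: "(\<Sum>c<2. a c * cnj (a c)) = 1"
  shows "\<exists>V. unitary_mat D V \<and> (\<forall>c<D. V $$ (c, 0) = (if c < 2 then a c else 0))"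
proof -
  define G where "G c c' = (if c' = 0 then a c else if c = 0 then - cnj (a 1) else cnj (a 0))" for c c' :: nat
  have "(\<Sum>e<2. G c e * cnj (G c' e)) = (if c = c' then 1 else 0)" if "c < 2" "c' < 2" for c c'
    using less_two_cases[OF that(1)] less_two_cases[OF that(2)] unit
    by (auto simp: sum_two G_def algebra_simps)
  then have "unitary_mat D (mat D D (\<lambda>(c, c'). if c < 2 \<and> c' < 2 then G c c' else if c = c' then 1 else 0))"
    by (rule unitary_mat_block_2x2[OF D])
  moreover have "\<forall>c<D. mat D D (\<lambda>(c, c'). if c < 2 \<and> c' < 2 then G c c' else if c = c' then 1 else 0) $$ (c, 0)
      = (if c < 2 then a c else 0)"
    using D by (auto simp: G_def)
  ultimately show ?thesis by blast
qed

section \<open>Inner products on finite index sets\<close>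

definition inner_on :: "'a set \<Rightarrow> ('a \<Rightarrow> complex) \<Rightarrow> ('a \<Rightarrow> complex) \<Rightarrow> complex" where
  "inner_on S u v = (\<Sum>x\<in>S. cnj (u x) * v x)"

definition orthonormal_pair :: "'a set \<Rightarrow> (nat \<Rightarrow> 'a \<Rightarrow> complex) \<Rightarrow> bool" where
  "orthonormal_pair S e \<longleftrightarrow> (\<forall>c<2. \<forall>c'<2. inner_on S (e c) (e c') = (if c = c' then 1 else 0))"

definition in_pair_span :: "'a set \<Rightarrow> (nat \<Rightarrow> 'a \<Rightarrow> complex) \<Rightarrow> ('a \<Rightarrow> complex) \<Rightarrow> bool" where
  "in_pair_span S e u \<longleftrightarrow> (\<forall>x\<in>S. u x = (\<Sum>c<2. inner_on S (e c) u * e c x))"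

lemma inner_on_commute: "inner_on S v u = cnj (inner_on S u v)"
  unfolding inner_on_def by (simp add: mult.commute)

lemma inner_on_cong:
  "(\<And>x. x \<in> S \<Longrightarrow> u x = u' x) \<Longrightarrow> (\<And>x. x \<in> S \<Longrightarrow> v x = v' x) \<Longrightarrow> inner_on S u v = inner_on S u' v'"
  unfolding inner_on_def by (intro sum.cong) auto

lemma inner_on_lincomb_right:
  "inner_on S u (\<lambda>x. \<Sum>c\<in>C. a c * v c x) = (\<Sum>c\<in>C. a c * inner_on S u (v c))"
  unfolding inner_on_def sum_distrib_left by (subst sum.swap) (simp add: mult_ac)

lemma inner_on_lincomb_left:
  "inner_on S (\<lambda>x. \<Sum>c\<in>C. a c * u c x) v = (\<Sum>c\<in>C. cnj (a c) * inner_on S (u c) v)"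
  unfolding inner_on_def cnj_sum sum_distrib_left sum_distrib_right by (subst sum.swap) (simp add: mult_ac)

lemma inner_on_add_right: "inner_on S u (\<lambda>x. v x + v' x) = inner_on S u v + inner_on S u v'"
  unfolding inner_on_def by (simp add: distrib_left sum.distrib)

lemma inner_on_scale_right: "inner_on S u (\<lambda>x. a * v x) = a * inner_on S u v"
  unfolding inner_on_def by (simp add: sum_distrib_left mult_ac)

lemma inner_on_scale_left: "inner_on S (\<lambda>x. a * u x) v = cnj a * inner_on S u v"
  unfolding inner_on_def by (simp add: sum_distrib_left mult_ac)

lemma inner_on_self: "inner_on S u u = of_real (\<Sum>x\<in>S. (cmod (u x))\<^sup>2)"
  unfolding inner_on_def by (simp add: cnj_mult_self)

lemma inner_on_self_eq_0:
  assumes "finite S" "inner_on S u u = 0" "x \<in> S"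
  shows "u x = 0"
proof -
  have "complex_of_real (\<Sum>x\<in>S. (cmod (u x))\<^sup>2) = 0" using assms(2) unfolding inner_on_self .
  then have "(\<Sum>x\<in>S. (cmod (u x))\<^sup>2) = 0" by (simp only: of_real_eq_0_iff)
  then show ?thesis using assms(1,3) by (simp add: sum_nonneg_eq_0_iff)
qed

lemma inner_on_delta:
  assumes "finite S" "x\<^sub>0 \<in> S"
  shows "inner_on S (\<lambda>x. if x = x\<^sub>0 then 1 else 0) v = v x\<^sub>0"
proof -
  have "inner_on S (\<lambda>x. if x = x\<^sub>0 then 1 else 0) v = (\<Sum>x\<in>S. if x = x\<^sub>0 then v x\<^sub>0 else 0)"
    unfolding inner_on_def by (intro sum.cong) auto
  then show ?thesis using assms by simp
qed

lemma inner_on_normalize: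
  assumes "inner_on S u u \<noteq> 0"
  shows "\<exists>r e. r \<noteq> 0 \<and> inner_on S e e = 1 \<and> (\<forall>x. u x = r * e x)"
proof -
  define q where "q = (\<Sum>x\<in>S. (cmod (u x))\<^sup>2)"
  have q_pos: "q > 0"
    using assms sum_nonneg[of S "\<lambda>x. (cmod (u x))\<^sup>2"] unfolding inner_on_self q_def[symmetric]
    by fastforce
  define r where "r = complex_of_real (sqrt q)"
  have "r \<noteq> 0" using q_pos by (simp add: r_def)
  moreover have "inner_on S (\<lambda>x. u x / r) (\<lambda>x. u x / r) = 1"
  proof -
    have "inner_on S (\<lambda>x. u x / r) (\<lambda>x. u x / r) = cnj (1 / r) * (1 / r) * of_real q"
      using inner_on_scale_left[of S "1 / r" u] inner_on_scale_right[of S "\<lambda>x. u x / r" "1 / r" u]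
      by (simp add: inner_on_self q_def)
    also have "\<dots> = 1" using q_pos by (simp add: r_def field_simps of_real_mult[symmetric] del: of_real_mult)
    finally show ?thesis .
  qed
  moreover have "u x = r * (u x / r)" for x using \<open>r \<noteq> 0\<close> by simp
  ultimately show ?thesis by blast
qed

lemma unit_vector_along:
  assumes "finite S" "inner_on S f f = 1"
  obtains e where "inner_on S e e = 1" "\<And>x. x \<in> S \<Longrightarrow> y x = inner_on S e y * e x"
    and "\<And>g. inner_on S g y = 0 \<Longrightarrow> inner_on S g f = 0 \<Longrightarrow> inner_on S g e = 0"
proof (cases "inner_on S y y = 0")
  case True
  have y0: "y x = 0" if "x \<in> S" for x by (rule inner_on_self_eq_0[OF assms(1) True that])
  then have "inner_on S f y = 0" unfolding inner_on_def by simp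
  then show ?thesis using that[of f] assms(2) y0 by simp
next
  case False
  then obtain r e where r: "r \<noteq> 0" "inner_on S e e = 1" and y_eq: "y = (\<lambda>x. r * e x)"
    using inner_on_normalize by blast
  have e_y: "inner_on S e y = r" using r(2) by (simp add: y_eq inner_on_scale_right)
  show ?thesis
  proof (rule that)
    show "inner_on S e e = 1" by (fact r(2))
    show "y x = inner_on S e y * e x" for x unfolding e_y by (simp add: y_eq)
    show "inner_on S g e = 0" if "inner_on S g y = 0" for g
      using that r(1) by (simp add: y_eq inner_on_scale_right)
  qed
qed

lemma orthonormal_completion:
  assumes S: "finite S" and e\<^sub>0: "inner_on S e\<^sub>0 e\<^sub>0 = 1"
    and f: "inner_on S f f = 1" "inner_on S e\<^sub>0 f = 0"
  obtains e\<^sub>1 where "inner_on S e\<^sub>1 e\<^sub>1 = 1" "inner_on S e\<^sub>0 e\<^sub>1 = 0"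
    and "\<And>x. x \<in> S \<Longrightarrow> v x = inner_on S e\<^sub>0 v * e\<^sub>0 x + inner_on S e\<^sub>1 v * e\<^sub>1 x"
proof -
  define p where "p = (\<lambda>x. v x - inner_on S e\<^sub>0 v * e\<^sub>0 x)"
  have "inner_on S e\<^sub>0 p = 0"
    using inner_on_add_right[of S e\<^sub>0 v "\<lambda>x. - inner_on S e\<^sub>0 v * e\<^sub>0 x"] e\<^sub>0
      inner_on_scale_right[of S e\<^sub>0 "- inner_on S e\<^sub>0 v" e\<^sub>0]
    by (simp add: p_def)
  obtain e\<^sub>1 where e\<^sub>1: "inner_on S e\<^sub>1 e\<^sub>1 = 1" "\<And>x. x \<in> S \<Longrightarrow> p x = inner_on S e\<^sub>1 p * e\<^sub>1 x"
    and orth: "\<And>g. inner_on S g p = 0 \<Longrightarrow> inner_on S g f = 0 \<Longrightarrow> inner_on S g e\<^sub>1 = 0"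
    by (rule unit_vector_along[OF S f(1), of p]) blast
  have "inner_on S e\<^sub>0 e\<^sub>1 = 0" using orth \<open>inner_on S e\<^sub>0 p = 0\<close> f(2) by blast
  then have "inner_on S e\<^sub>1 e\<^sub>0 = 0" using inner_on_commute[of S e\<^sub>1 e\<^sub>0] by simp
  have "inner_on S e\<^sub>1 v = inner_on S e\<^sub>1 (\<lambda>x. inner_on S e\<^sub>0 v * e\<^sub>0 x + p x)"
    by (simp add: p_def)
  also have "\<dots> = inner_on S e\<^sub>1 p"
    using \<open>inner_on S e\<^sub>1 e\<^sub>0 = 0\<close> by (simp add: inner_on_add_right inner_on_scale_right)
  finally have "v x = inner_on S e\<^sub>0 v * e\<^sub>0 x + inner_on S e\<^sub>1 v * e\<^sub>1 x" if "x \<in> S" for x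
    using e\<^sub>1(2)[OF that] by (simp add: p_def algebra_simps)
  with e\<^sub>1(1) \<open>inner_on S e\<^sub>0 e\<^sub>1 = 0\<close> show ?thesis using that by blast
qed

text \<open>\<open>f\<^sub>0\<close>, \<open>f\<^sub>1\<close> complete the frame when \<open>u\<close> and \<open>v\<close> span less than a plane.\<close>

lemma orthonormal_pair_spanning:
  assumes S: "finite S"
    and f: "inner_on S f\<^sub>0 f\<^sub>0 = 1" "inner_on S f\<^sub>1 f\<^sub>1 = 1" "inner_on S f\<^sub>0 f\<^sub>1 = 0" "inner_on S u f\<^sub>1 = 0"
  shows "\<exists>e. orthonormal_pair S e \<and> in_pair_span S e u \<and> in_pair_span S e v"
proof -
  obtain e\<^sub>0 where e\<^sub>0: "inner_on S e\<^sub>0 e\<^sub>0 = 1" "\<And>x. x \<in> S \<Longrightarrow> u x = inner_on S e\<^sub>0 u * e\<^sub>0 x"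
    and orth: "\<And>g. inner_on S g u = 0 \<Longrightarrow> inner_on S g f\<^sub>0 = 0 \<Longrightarrow> inner_on S g e\<^sub>0 = 0"
    by (rule unit_vector_along[OF S f(1), of u]) blast
  have "inner_on S f\<^sub>1 e\<^sub>0 = 0"
    using orth[of f\<^sub>1] f(3,4) inner_on_commute[of S f\<^sub>1 u] inner_on_commute[of S f\<^sub>1 f\<^sub>0] by simp
  then have "inner_on S e\<^sub>0 f\<^sub>1 = 0" using inner_on_commute[of S e\<^sub>0 f\<^sub>1] by simp
  then obtain e\<^sub>1 where e\<^sub>1: "inner_on S e\<^sub>1 e\<^sub>1 = 1" "inner_on S e\<^sub>0 e\<^sub>1 = 0"
    and v: "\<And>x. x \<in> S \<Longrightarrow> v x = inner_on S e\<^sub>0 v * e\<^sub>0 x + inner_on S e\<^sub>1 v * e\<^sub>1 x"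
    by (rule orthonormal_completion[OF S e\<^sub>0(1) f(2), where v = v]) blast
  have "inner_on S e\<^sub>1 e\<^sub>0 = 0" using e\<^sub>1(2) inner_on_commute[of S e\<^sub>1 e\<^sub>0] by simp
  have "inner_on S e\<^sub>1 u = inner_on S e\<^sub>1 (\<lambda>x. inner_on S e\<^sub>0 u * e\<^sub>0 x)"
    by (rule inner_on_cong) (use e\<^sub>0(2) in auto)
  then have "inner_on S e\<^sub>1 u = 0"
    using \<open>inner_on S e\<^sub>1 e\<^sub>0 = 0\<close> by (simp add: inner_on_scale_right)
  define e where "e c = (if c = 0 then e\<^sub>0 else e\<^sub>1)" for c :: nat
  have "inner_on S (e c) (e c') = (if c = c' then 1 else 0)" if "c < 2" "c' < 2" for c c'
    using less_two_cases[OF that(1)] less_two_cases[OF that(2)] e\<^sub>0(1) e\<^sub>1 \<open>inner_on S e\<^sub>1 e\<^sub>0 = 0\<close>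
    by (auto simp: e_def)
  then have "orthonormal_pair S e" unfolding orthonormal_pair_def by blast
  moreover have "in_pair_span S e u"
    unfolding in_pair_span_def e_def using e\<^sub>0(2) \<open>inner_on S e\<^sub>1 u = 0\<close> by (simp add: sum_two)
  moreover have "in_pair_span S e v"
    unfolding in_pair_span_def e_def using v by (simp add: sum_two)
  ultimately show ?thesis by blast
qed

lemma in_pair_span_inner_self:
  assumes "orthonormal_pair S e" "in_pair_span S e u"
  shows "inner_on S u u = (\<Sum>c<2. inner_on S (e c) u * cnj (inner_on S (e c) u))"
proof -
  have "inner_on S u u = inner_on S u (\<lambda>x. \<Sum>c<2. inner_on S (e c) u * e c x)"
    by (rule inner_on_cong) (use assms(2) in \<open>auto simp: in_pair_span_def\<close>)
  also have "\<dots> = (\<Sum>c<2. inner_on S (e c) u * inner_on S u (e c))"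
    by (rule inner_on_lincomb_right)
  also have "\<dots> = (\<Sum>c<2. inner_on S (e c) u * cnj (inner_on S (e c) u))"
    by (simp add: inner_on_commute[of S u "e _"])
  finally show ?thesis .
qed

section \<open>A two-level realisation of every behaviour\<close>

locale purified_realisation =
  fixes N d K :: nat and rho :: "complex mat" and U :: "nat \<Rightarrow> bool \<Rightarrow> complex mat"
    and Pm :: "bool \<Rightarrow> complex mat" and w :: "nat \<Rightarrow> nat \<Rightarrow> complex"
  assumes N_pos: "0 < N" and d_pos: "0 < d"
    and density: "density_op (N * d) rho"
    and unitary: "\<And>j b. j < N \<Longrightarrow> unitary_mat d (U j b)"
    and povm: "povm2 (N * d) Pm"
    and rho_gram: "\<And>r r'. r < N * d \<Longrightarrow> r' < N * d \<Longrightarrow> rho $$ (r, r') = (\<Sum>k<K. w k r * cnj (w k r'))"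
    and w_vanish: "\<And>k r. K \<le> k \<Longrightarrow> w k r = 0"
begin

text \<open>The purification \<open>\<Sum>\<^sub>k w\<^sub>k \<otimes> |k\<rangle>\<close> of \<open>rho\<close> lives in \<open>\<complex>\<^sup>N\<^sup>d \<otimes> \<complex>\<^sup>K\<^sup>+\<^sup>2\<close>; the two
  unused levels \<open>K\<close>, \<open>K + 1\<close> of the purifying register supply spare orthonormal vectors.
  \<open>branch j b\<close> is its \<open>j\<close>-th block after applying \<open>U j b\<close>, a vector indexed by \<open>reg\<close>.\<close>

abbreviation reg :: "(nat \<times> nat) set" where
  "reg \<equiv> {..<d} \<times> {..<K + 2}"

definition D :: nat where
  "D = N + 1"

definition branch :: "nat \<Rightarrow> bool \<Rightarrow> nat \<times> nat \<Rightarrow> complex" where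
  "branch j b = (\<lambda>(s, k). \<Sum>t<d. U j b $$ (s, t) * w k (j * d + t))"

definition frame :: "nat \<Rightarrow> nat \<Rightarrow> nat \<times> nat \<Rightarrow> complex" where
  "frame j = (SOME e. orthonormal_pair reg e \<and> in_pair_span reg e (branch j False) \<and> in_pair_span reg e (branch j True))"

definition coord :: "nat \<Rightarrow> bool \<Rightarrow> nat \<Rightarrow> complex" where
  "coord j b c = inner_on reg (frame j c) (branch j b)"

definition branch_norm :: "nat \<Rightarrow> real" where
  "branch_norm j = sqrt (Re (inner_on reg (branch j False) (branch j False)))"

definition pm_block :: "bool \<Rightarrow> nat \<Rightarrow> nat \<Rightarrow> (nat \<times> nat \<Rightarrow> complex) \<Rightarrow> nat \<times> nat \<Rightarrow> complex" where
  "pm_block a j j' v = (\<lambda>(s, k). \<Sum>s'<d. Pm a $$ (j * d + s, j' * d + s') * v (s', k))"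

definition compressed_povm :: "bool \<Rightarrow> nat \<Rightarrow> nat \<Rightarrow> nat \<Rightarrow> nat \<Rightarrow> complex" where
  "compressed_povm a j c j' c' = inner_on reg (frame j c) (pm_block a j j' (frame j' c'))"

definition first_column :: "nat \<Rightarrow> bool \<Rightarrow> nat \<Rightarrow> complex" where
  "first_column j b c =
     (if branch_norm j = 0 then (if c = 0 then 1 else 0) else coord j b c / of_real (branch_norm j))"

definition U_sim :: "nat \<Rightarrow> bool \<Rightarrow> complex mat" where
  "U_sim j b = (SOME V. unitary_mat D V \<and> (\<forall>c<D. V $$ (c, 0) = (if c < 2 then first_column j b c else 0)))"

definition phi_sim :: "nat \<Rightarrow> complex" where
  "phi_sim p = (if p mod D = 0 then of_real (branch_norm (p div D)) else 0)"

definition rho_sim :: "complex mat" where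
  "rho_sim = mat (N * D) (N * D) (\<lambda>(p, q). phi_sim p * cnj (phi_sim q))"

text \<open>On the two-dimensional block \<open>|j\<rangle> \<otimes> span{|0\<rangle>, |1\<rangle>}\<close> the measurement is \<open>Pm a\<close> compressed to
  \<open>span{frame j 0, frame j 1}\<close>; the remaining basis vectors are assigned to outcome \<open>False\<close>.\<close>

definition Pm_sim :: "bool \<Rightarrow> complex mat" where
  "Pm_sim a = mat (N * D) (N * D) (\<lambda>(p, q).
     if p mod D < 2 \<and> q mod D < 2 then compressed_povm a (p div D) (p mod D) (q div D) (q mod D)
     else if \<not> a \<and> p = q then 1 else 0)"

lemma inner_on_reg: "inner_on reg u v = (\<Sum>k<K + 2. \<Sum>s<d. cnj (u (s, k)) * v (s, k))"
proof -
  have "inner_on reg u v = (\<Sum>(s, k)\<in>reg. cnj (u (s, k)) * v (s, k))"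
    unfolding inner_on_def by (rule sum.cong) auto
  also have "\<dots> = (\<Sum>s<d. \<Sum>k<K + 2. cnj (u (s, k)) * v (s, k))"
    by (rule sum.cartesian_product[symmetric])
  also have "\<dots> = (\<Sum>k<K + 2. \<Sum>s<d. cnj (u (s, k)) * v (s, k))"
    by (rule sum.swap)
  finally show ?thesis .
qed

lemma branch_vanish: "K \<le> k \<Longrightarrow> branch j b (s, k) = 0"
  unfolding branch_def by (simp add: w_vanish)

lemma frame_spec: "orthonormal_pair reg (frame j)" "in_pair_span reg (frame j) (branch j b)"
proof -
  let ?f = "\<lambda>k z. if z = (0, k) then 1 else (0::complex)"
  have mem: "(0, K) \<in> reg" "(0, K + 1) \<in> reg" using d_pos by auto
  have "inner_on reg (?f (K + 1)) (?f (K + 1)) = 1" "inner_on reg (?f K) (?f K) = 1"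
    "inner_on reg (?f (K + 1)) (?f K) = 0"
    using inner_on_delta[OF _ mem(1)] inner_on_delta[OF _ mem(2)] by simp_all
  moreover have "inner_on reg (branch j False) (?f K) = 0"
    using inner_on_delta[OF _ mem(1), of "branch j False"] inner_on_commute[of reg "branch j False" "?f K"]
    by (simp add: branch_vanish)
  ultimately have "\<exists>e. orthonormal_pair reg e \<and> in_pair_span reg e (branch j False) \<and> in_pair_span reg e (branch j True)"
    by (intro orthonormal_pair_spanning) auto
  then have "orthonormal_pair reg (frame j) \<and> in_pair_span reg (frame j) (branch j False)
      \<and> in_pair_span reg (frame j) (branch j True)"
    unfolding frame_def by (rule someI_ex)
  then show "orthonormal_pair reg (frame j)" and "in_pair_span reg (frame j) (branch j b)"
    by (cases b, simp_all)+
qed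

lemma frame_orthonormal: "c < 2 \<Longrightarrow> c' < 2 \<Longrightarrow> inner_on reg (frame j c) (frame j c') = (if c = c' then 1 else 0)"
  using frame_spec(1) unfolding orthonormal_pair_def by blast

lemma branch_expansion: "z \<in> reg \<Longrightarrow> branch j b z = (\<Sum>c<2. coord j b c * frame j c z)"
  using frame_spec(2) unfolding in_pair_span_def coord_def by blast

lemma inner_branch_self:
  assumes "j < N"
  shows "inner_on reg (branch j b) (branch j b) = (\<Sum>k<K + 2. \<Sum>t<d. cnj (w k (j * d + t)) * w k (j * d + t))"
  unfolding inner_on_reg branch_def prod.case
  by (intro sum.cong refl unitary_mat_norm_preserving unitary assms)

lemma branch_norm_sq:
  assumes "j < N"
  shows "complex_of_real ((branch_norm j)\<^sup>2) = inner_on reg (branch j b) (branch j b)"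
proof -
  have "complex_of_real ((branch_norm j)\<^sup>2) = inner_on reg (branch j False) (branch j False)"
    unfolding branch_norm_def inner_on_self by (simp add: sum_nonneg)
  then show ?thesis using inner_branch_self[OF assms] by simp
qed

lemma coord_norm:
  assumes "j < N"
  shows "(\<Sum>c<2. coord j b c * cnj (coord j b c)) = of_real ((branch_norm j)\<^sup>2)"
  unfolding branch_norm_sq[OF assms, of b] coord_def by (rule in_pair_span_inner_self[OF frame_spec, symmetric])

lemma coord_zero:
  assumes "j < N" "branch_norm j = 0"
  shows "coord j b c = 0"
proof -
  have "inner_on reg (branch j b) (branch j b) = 0" using branch_norm_sq[OF assms(1), of b] assms(2) by simp
  then have "branch j b z = 0" if "z \<in> reg" for z using inner_on_self_eq_0[OF _ _ that] by simp
  then show ?thesis unfolding coord_def inner_on_def by (intro sum.neutral) simp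
qed

lemma first_column_unit:
  assumes "j < N"
  shows "(\<Sum>c<2. first_column j b c * cnj (first_column j b c)) = 1"
proof (cases "branch_norm j = 0")
  case True
  then show ?thesis by (simp add: first_column_def sum_two)
next
  case False
  have "(\<Sum>c<2. first_column j b c * cnj (first_column j b c))
      = (\<Sum>c<2. coord j b c * cnj (coord j b c)) / of_real ((branch_norm j)\<^sup>2)"
    using False by (simp add: first_column_def sum_two field_simps power2_eq_square)
  then show ?thesis using False by (simp add: coord_norm[OF assms])
qed

lemma D_ge_2: "2 \<le> D"
  using N_pos by (simp add: D_def)

lemma D_pos: "0 < D"
  using D_ge_2 by simp

lemma U_sim_unitary: "j < N \<Longrightarrow> unitary_mat D (U_sim j b)"
  and U_sim_first_column: "j < N \<Longrightarrow> c < D \<Longrightarrow> U_sim j b $$ (c, 0) = (if c < 2 then first_column j b c else 0)"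
proof -
  assume "j < N"
  have "\<exists>V. unitary_mat D V \<and> (\<forall>c<D. V $$ (c, 0) = (if c < 2 then first_column j b c else 0))"
    by (rule unitary_mat_with_first_column[OF D_ge_2 first_column_unit[OF \<open>j < N\<close>]])
  then have "unitary_mat D (U_sim j b) \<and> (\<forall>c<D. U_sim j b $$ (c, 0) = (if c < 2 then first_column j b c else 0))"
    unfolding U_sim_def by (rule someI_ex)
  then show "unitary_mat D (U_sim j b)" "c < D \<Longrightarrow> U_sim j b $$ (c, 0) = (if c < 2 then first_column j b c else 0)"
    by auto
qed

definition compressed_form :: "bool \<Rightarrow> (nat \<Rightarrow> nat \<Rightarrow> complex) \<Rightarrow> complex" where
  "compressed_form a \<alpha> = (\<Sum>j<N. \<Sum>c<2. \<Sum>j'<N. \<Sum>c'<2. cnj (\<alpha> j c) * compressed_povm a j c j' c' * \<alpha> j' c')"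

lemma Pm_carrier: "Pm a \<in> carrier_mat (N * d) (N * d)"
  using povm unfolding povm2_def psd_mat_def by (cases a) auto

lemma Pm_psd_form: "psd_form (N * d) (\<lambda>r r'. Pm a $$ (r, r'))"
  using povm psd_mat_iff_psd_form[OF Pm_carrier] unfolding povm2_def by (cases a) auto

lemma Pm_sum_entry:
  assumes "r < N * d" "r' < N * d"
  shows "Pm False $$ (r, r') + Pm True $$ (r, r') = (if r = r' then 1 else 0)"
proof -
  have "(Pm False + Pm True) $$ (r, r') = 1\<^sub>m (N * d) $$ (r, r')" using povm unfolding povm2_def by simp
  then show ?thesis using assms Pm_carrier[of True] by simp
qed

lemma rho_carrier: "rho \<in> carrier_mat (N * d) (N * d)"
  using density unfolding density_op_def psd_mat_def by auto

lemma pm_block_cong: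
  assumes "\<And>z. z \<in> reg \<Longrightarrow> v z = v' z" "z \<in> reg"
  shows "pm_block a j j' v z = pm_block a j j' v' z"
  using assms unfolding pm_block_def by (cases z) (auto intro!: sum.cong)

lemma pm_block_lincomb:
  fixes \<beta> :: "nat \<Rightarrow> complex"
  shows "pm_block a j j' (\<lambda>z. \<Sum>c<2. \<beta> c * f c z) = (\<lambda>z. \<Sum>c<2. \<beta> c * pm_block a j j' (f c) z)"
proof
  fix z :: "nat \<times> nat"
  obtain s k where z: "z = (s, k)" by fastforce
  show "pm_block a j j' (\<lambda>z. \<Sum>c<2. \<beta> c * f c z) z = (\<Sum>c<2. \<beta> c * pm_block a j j' (f c) z)"
    unfolding pm_block_def z prod.case sum_distrib_left by (subst sum.swap) (simp add: mult_ac)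
qed

lemma inner_pm_block_lincomb:
  "inner_on reg (\<lambda>z. \<Sum>c<2. \<alpha> c * frame j c z) (pm_block a j j' (\<lambda>z. \<Sum>c'<2. \<beta> c' * frame j' c' z))
     = (\<Sum>c<2. \<Sum>c'<2. cnj (\<alpha> c) * compressed_povm a j c j' c' * \<beta> c')"
  unfolding pm_block_lincomb inner_on_lincomb_left inner_on_lincomb_right compressed_povm_def
  by (simp add: sum_distrib_left mult_ac)

lemma inner_pm_block_branch:
  "inner_on reg (branch j b) (pm_block a j j' (branch j' b'))
     = (\<Sum>c<2. \<Sum>c'<2. cnj (coord j b c) * compressed_povm a j c j' c' * coord j' b' c')"
proof -
  have "inner_on reg (branch j b) (pm_block a j j' (branch j' b'))
      = inner_on reg (\<lambda>z. \<Sum>c<2. coord j b c * frame j c z)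
          (pm_block a j j' (\<lambda>z. \<Sum>c'<2. coord j' b' c' * frame j' c' z))"
    by (intro inner_on_cong pm_block_cong) (simp_all add: branch_expansion)
  then show ?thesis by (simp only: inner_pm_block_lincomb)
qed

lemma sum_inner_pm_block:
  "(\<Sum>j<N. \<Sum>j'<N. inner_on reg (y j) (pm_block a j j' (y j')))
     = (\<Sum>k<K + 2. quad_form (N * d) (\<lambda>r r'. Pm a $$ (r, r')) (\<lambda>r. y (r div d) (r mod d, k)))"
proof -
  let ?F = "\<lambda>j s j' s' k. cnj (y j (s, k)) * Pm a $$ (j * d + s, j' * d + s') * y j' (s', k)"
  have "(\<Sum>j<N. \<Sum>j'<N. inner_on reg (y j) (pm_block a j j' (y j')))
      = (\<Sum>j<N. \<Sum>j'<N. \<Sum>k<K + 2. \<Sum>s<d. \<Sum>s'<d. ?F j s j' s' k)"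
    unfolding inner_on_reg pm_block_def by (simp add: sum_distrib_left mult_ac)
  also have "\<dots> = (\<Sum>j<N. \<Sum>k<K + 2. \<Sum>j'<N. \<Sum>s<d. \<Sum>s'<d. ?F j s j' s' k)"
    by (rule sum.cong[OF refl]) (rule sum.swap)
  also have "\<dots> = (\<Sum>k<K + 2. \<Sum>j<N. \<Sum>j'<N. \<Sum>s<d. \<Sum>s'<d. ?F j s j' s' k)"
    by (rule sum.swap)
  also have "\<dots> = (\<Sum>k<K + 2. \<Sum>j<N. \<Sum>s<d. \<Sum>j'<N. \<Sum>s'<d. ?F j s j' s' k)"
    by (rule sum.cong[OF refl], rule sum.cong[OF refl], rule sum.swap)
  also have "\<dots> = (\<Sum>k<K + 2. quad_form (N * d) (\<lambda>r r'. Pm a $$ (r, r')) (\<lambda>r. y (r div d) (r mod d, k)))"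
    unfolding quad_form_blocks[OF d_pos] by (intro sum.cong refl) simp
  finally show ?thesis .
qed

lemma compressed_form_eq:
  "compressed_form a \<alpha> = (\<Sum>k<K + 2. quad_form (N * d) (\<lambda>r r'. Pm a $$ (r, r'))
      (\<lambda>r. \<Sum>c<2. \<alpha> (r div d) c * frame (r div d) c (r mod d, k)))"
proof -
  have "compressed_form a \<alpha>
      = (\<Sum>j<N. \<Sum>j'<N. \<Sum>c<2. \<Sum>c'<2. cnj (\<alpha> j c) * compressed_povm a j c j' c' * \<alpha> j' c')"
    unfolding compressed_form_def by (rule sum.cong[OF refl]) (rule sum.swap)
  also have "\<dots> = (\<Sum>j<N. \<Sum>j'<N. inner_on reg (\<lambda>z. \<Sum>c<2. \<alpha> j c * frame j c z)
      (pm_block a j j' (\<lambda>z. \<Sum>c'<2. \<alpha> j' c' * frame j' c' z)))"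
    by (simp only: inner_pm_block_lincomb)
  finally show ?thesis by (simp only: sum_inner_pm_block)
qed

lemma compressed_form_nonneg: "Im (compressed_form a \<alpha>) = 0 \<and> Re (compressed_form a \<alpha>) \<ge> 0"
  unfolding compressed_form_eq by (rule nonneg_real_sum) (use Pm_psd_form in \<open>auto simp: psd_form_def\<close>)

lemma ctrace_source:
  "ctrace (Pm a * ctrl_unitary N d U x * rho * cadj (ctrl_unitary N d U x))
     = compressed_form a (\<lambda>j. coord j (x j))"
proof -
  have C: "ctrl_unitary N d U x \<in> carrier_mat (N * d) (N * d)" unfolding ctrl_unitary_def by simp
  have gram: "rho $$ (r, r') = (\<Sum>k<K + 2. w k r * cnj (w k r'))" if "r < N * d" "r' < N * d" for r r'
    using rho_gram[OF that] by (subst sum_lessThan_vanishing_tail[of K]) (auto simp: w_vanish)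
  have row: "(\<Sum>c<N * d. ctrl_unitary N d U x $$ (r, c) * w k c) = branch (r div d) (x (r div d)) (r mod d, k)"
    if "r < N * d" for r k
  proof -
    have "r div d < N" "r mod d < d" using that d_pos by (auto simp: less_mult_imp_div_less)
    from sum_ctrl_unitary_row[OF this, of U x "w k"] show ?thesis by (simp add: branch_def)
  qed
  have "ctrace (Pm a * ctrl_unitary N d U x * rho * cadj (ctrl_unitary N d U x))
      = (\<Sum>k<K + 2. quad_form (N * d) (\<lambda>r r'. Pm a $$ (r, r'))
          (\<lambda>r. \<Sum>c<N * d. ctrl_unitary N d U x $$ (r, c) * w k c))"
    by (rule ctrace_sandwich_gram[OF Pm_carrier C rho_carrier gram])
  also have "\<dots> = (\<Sum>k<K + 2. quad_form (N * d) (\<lambda>r r'. Pm a $$ (r, r'))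
      (\<lambda>r. branch (r div d) (x (r div d)) (r mod d, k)))"
    by (intro sum.cong refl quad_form_cong) (simp_all add: row)
  also have "\<dots> = (\<Sum>j<N. \<Sum>j'<N. inner_on reg (branch j (x j)) (pm_block a j j' (branch j' (x j'))))"
    by (rule sum_inner_pm_block[symmetric])
  also have "\<dots> = compressed_form a (\<lambda>j. coord j (x j))"
    unfolding inner_pm_block_branch compressed_form_def by (rule sum.cong[OF refl]) (rule sum.swap)
  finally show ?thesis .
qed

lemma coord_eq_first_column: "j < N \<Longrightarrow> coord j b c = first_column j b c * of_real (branch_norm j)"
  by (cases "branch_norm j = 0") (auto simp: coord_zero first_column_def)

lemma phi_sim_block: "t < D \<Longrightarrow> phi_sim (j * D + t) = (if t = 0 then of_real (branch_norm j) else 0)"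
  unfolding phi_sim_def by simp

lemma sim_state_after_unitaries:
  assumes "j < N" "c < D"
  shows "(\<Sum>c'<N * D. ctrl_unitary N D U_sim x $$ (j * D + c, c') * phi_sim c') = (if c < 2 then coord j (x j) c else 0)"
proof -
  have "(\<Sum>c'<N * D. ctrl_unitary N D U_sim x $$ (j * D + c, c') * phi_sim c')
      = (\<Sum>t<D. U_sim j (x j) $$ (c, t) * phi_sim (j * D + t))"
    by (rule sum_ctrl_unitary_row[OF assms])
  also have "\<dots> = (\<Sum>t<D. if t = 0 then U_sim j (x j) $$ (c, 0) * of_real (branch_norm j) else 0)"
    by (intro sum.cong refl) (simp add: phi_sim_block)
  also have "\<dots> = (if c < 2 then coord j (x j) c else 0)"
    using assms by (simp add: U_sim_first_column coord_eq_first_column)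
  finally show ?thesis .
qed

lemma Pm_sim_carrier: "Pm_sim a \<in> carrier_mat (N * D) (N * D)"
  unfolding Pm_sim_def by simp

lemma rho_sim_carrier: "rho_sim \<in> carrier_mat (N * D) (N * D)"
  unfolding rho_sim_def by simp

lemma ctrace_target:
  "ctrace (Pm_sim a * ctrl_unitary N D U_sim x * rho_sim * cadj (ctrl_unitary N D U_sim x))
     = compressed_form a (\<lambda>j. coord j (x j))"
proof -
  let ?v = "\<lambda>r. \<Sum>c<N * D. ctrl_unitary N D U_sim x $$ (r, c) * phi_sim c"
  have C: "ctrl_unitary N D U_sim x \<in> carrier_mat (N * D) (N * D)" unfolding ctrl_unitary_def by simp
  have "ctrace (Pm_sim a * ctrl_unitary N D U_sim x * rho_sim * cadj (ctrl_unitary N D U_sim x))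
      = (\<Sum>k\<in>{0::nat}. quad_form (N * D) (\<lambda>p q. Pm_sim a $$ (p, q)) ?v)"
    by (rule ctrace_sandwich_gram[OF Pm_sim_carrier C rho_sim_carrier]) (simp add: rho_sim_def)
  also have "\<dots> = quad_form (N * D) (\<lambda>p q. Pm_sim a $$ (p, q)) ?v"
    by simp
  also have "\<dots> = (\<Sum>j<N. \<Sum>c<D. \<Sum>j'<N. \<Sum>c'<D.
      cnj (?v (j * D + c)) * Pm_sim a $$ (j * D + c, j' * D + c') * ?v (j' * D + c'))"
    by (rule quad_form_blocks[OF D_pos])
  also have "\<dots> = (\<Sum>j<N. \<Sum>c<2. \<Sum>j'<N. \<Sum>c'<2.
      cnj (?v (j * D + c)) * Pm_sim a $$ (j * D + c, j' * D + c') * ?v (j' * D + c'))"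
    by (rule sum_block_pairs_restrict[OF D_ge_2]) (auto simp: sim_state_after_unitaries)
  also have "\<dots> = compressed_form a (\<lambda>j. coord j (x j))"
    unfolding compressed_form_def using D_ge_2
    by (intro sum.cong refl) (simp add: sim_state_after_unitaries Pm_sim_def block_index_less)
  finally show ?thesis .
qed

lemma pm_block_povm_sum:
  assumes "j < N" "j' < N" "z \<in> reg"
  shows "pm_block False j j' v z + pm_block True j j' v z = (if j = j' then v z else 0)"
proof -
  obtain s k where z: "z = (s, k)" "s < d" using assms(3) by blast
  have "pm_block False j j' v z + pm_block True j j' v z
      = (\<Sum>s'<d. (Pm False $$ (j * d + s, j' * d + s') + Pm True $$ (j * d + s, j' * d + s')) * v (s', k))"
    unfolding pm_block_def z by (simp add: sum.distrib distrib_right)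
  also have "\<dots> = (\<Sum>s'<d. if s' = s then (if j = j' then v (s, k) else 0) else 0)"
    by (intro sum.cong refl) (use assms z in \<open>auto simp: Pm_sum_entry block_index_less block_index_eq_iff\<close>)
  finally show ?thesis using z by simp
qed

lemma compressed_povm_sum:
  assumes "j < N" "j' < N" "c < 2" "c' < 2"
  shows "compressed_povm False j c j' c' + compressed_povm True j c j' c' = (if j = j' \<and> c = c' then 1 else 0)"
proof -
  have "compressed_povm False j c j' c' + compressed_povm True j c j' c'
      = inner_on reg (frame j c) (\<lambda>z. pm_block False j j' (frame j' c') z + pm_block True j j' (frame j' c') z)"
    unfolding compressed_povm_def inner_on_add_right ..
  also have "\<dots> = inner_on reg (frame j c) (\<lambda>z. if j = j' then frame j' c' z else 0)"
    by (rule inner_on_cong) (simp_all add: pm_block_povm_sum assms)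
  also have "\<dots> = (if j = j' \<and> c = c' then 1 else 0)"
  proof (cases "j = j'")
    case True
    then show ?thesis using frame_orthonormal[OF assms(3,4)] by simp
  next
    case False
    then show ?thesis by (simp add: inner_on_def)
  qed
  finally show ?thesis .
qed

lemma Pm_sim_psd: "psd_mat (N * D) (Pm_sim a)"
  unfolding psd_mat_iff_psd_form[OF Pm_sim_carrier] psd_form_def
proof
  fix v
  define T where "T p q = (if p mod D < 2 \<and> q mod D < 2
    then compressed_povm a (p div D) (p mod D) (q div D) (q mod D) else 0)" for p q
  define E where "E p q = (if \<not> a \<and> p = q \<and> \<not> p mod D < 2 then 1 else (0::complex))" for p q
  have "quad_form (N * D) (\<lambda>p q. Pm_sim a $$ (p, q)) v = quad_form (N * D) T v + quad_form (N * D) E v"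
    by (subst quad_form_add[symmetric], rule quad_form_cong) (auto simp: Pm_sim_def T_def E_def)
  moreover have "quad_form (N * D) T v = compressed_form a (\<lambda>j c. v (j * D + c))"
  proof -
    have "quad_form (N * D) T v
        = (\<Sum>j<N. \<Sum>c<D. \<Sum>j'<N. \<Sum>c'<D. cnj (v (j * D + c)) * T (j * D + c) (j' * D + c') * v (j' * D + c'))"
      by (rule quad_form_blocks[OF D_pos])
    also have "\<dots> = (\<Sum>j<N. \<Sum>c<2. \<Sum>j'<N. \<Sum>c'<2. cnj (v (j * D + c)) * T (j * D + c) (j' * D + c') * v (j' * D + c'))"
      by (rule sum_block_pairs_restrict[OF D_ge_2]) (auto simp: T_def)
    also have "\<dots> = compressed_form a (\<lambda>j c. v (j * D + c))"
      unfolding compressed_form_def using D_ge_2 by (intro sum.cong refl) (simp add: T_def)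
    finally show ?thesis .
  qed
  moreover have "Im (quad_form (N * D) E v) = 0 \<and> Re (quad_form (N * D) E v) \<ge> 0"
    unfolding quad_form_def
  proof (rule nonneg_real_sum)
    fix p
    have "(\<Sum>q<N * D. cnj (v p) * E p q * v q) = (if \<not> a \<and> \<not> p mod D < 2 \<and> p < N * D then cnj (v p) * v p else 0)"
      by (auto simp: E_def if_distrib[of "\<lambda>e. cnj (v p) * e * _"] cong: if_cong)
    then show "Im (\<Sum>q<N * D. cnj (v p) * E p q * v q) = 0 \<and> Re (\<Sum>q<N * D. cnj (v p) * E p q * v q) \<ge> 0"
      by (simp add: cnj_mult_self)
  qed
  ultimately show "Im (quad_form (N * D) (\<lambda>p q. Pm_sim a $$ (p, q)) v) = 0
      \<and> Re (quad_form (N * D) (\<lambda>p q. Pm_sim a $$ (p, q)) v) \<ge> 0"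
    using compressed_form_nonneg[of a "\<lambda>j c. v (j * D + c)"] by simp
qed

lemma Pm_sim_sum: "Pm_sim False + Pm_sim True = 1\<^sub>m (N * D)"
proof (rule eq_matI)
  fix p q assume "p < dim_row (1\<^sub>m (N * D))" "q < dim_col (1\<^sub>m (N * D))"
  then have pq: "p < N * D" "q < N * D" by auto
  then have "p div D < N" "q div D < N" by (auto simp: less_mult_imp_div_less)
  then have "(Pm_sim False + Pm_sim True) $$ (p, q) = (if p = q then 1 else 0)"
    using pq Pm_sim_carrier[of True] compressed_povm_sum[of "p div D" "q div D" "p mod D" "q mod D"]
      nat_eq_iff_div_mod[of p q D]
    by (auto simp: Pm_sim_def)
  then show "(Pm_sim False + Pm_sim True) $$ (p, q) = 1\<^sub>m (N * D) $$ (p, q)" using pq by simp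
qed (auto simp: Pm_sim_def)

lemma Pm_sim_povm: "povm2 (N * D) Pm_sim"
  unfolding povm2_def using Pm_sim_psd Pm_sim_sum by blast

lemma rho_sim_density: "density_op (N * D) rho_sim"
  unfolding density_op_def
proof
  show "psd_mat (N * D) rho_sim"
    unfolding psd_mat_iff_psd_form[OF rho_sim_carrier] psd_form_def
  proof
    fix v
    have "quad_form (N * D) (\<lambda>p q. rho_sim $$ (p, q)) v = quad_form (N * D) (\<lambda>p q. phi_sim p * cnj (phi_sim q)) v"
      by (rule quad_form_cong) (simp_all add: rho_sim_def)
    also have "\<dots> = of_real ((cmod (\<Sum>i<N * D. cnj (v i) * phi_sim i))\<^sup>2)"
      unfolding quad_form_rank_one by (rule complex_norm_square[symmetric])
    finally show "Im (quad_form (N * D) (\<lambda>p q. rho_sim $$ (p, q)) v) = 0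
        \<and> Re (quad_form (N * D) (\<lambda>p q. rho_sim $$ (p, q)) v) \<ge> 0"
      by simp
  qed
  have "ctrace rho_sim = (\<Sum>j<N. \<Sum>t<D. phi_sim (j * D + t) * cnj (phi_sim (j * D + t)))"
    unfolding ctrace_def rho_sim_def by (simp add: sum_blocks[OF D_pos])
  also have "\<dots> = (\<Sum>j<N. of_real ((branch_norm j)\<^sup>2))"
    by (intro sum.cong refl) (simp add: phi_sim_block power2_eq_square if_distrib D_pos cong: if_cong)
  also have "\<dots> = (\<Sum>j<N. \<Sum>k<K + 2. \<Sum>t<d. cnj (w k (j * d + t)) * w k (j * d + t))"
  proof (rule sum.cong[OF refl])
    fix j assume "j \<in> {..<N}"
    then have "j < N" by simp
    show "of_real ((branch_norm j)\<^sup>2) = (\<Sum>k<K + 2. \<Sum>t<d. cnj (w k (j * d + t)) * w k (j * d + t))"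
      unfolding branch_norm_sq[OF \<open>j < N\<close>, of False] inner_branch_self[OF \<open>j < N\<close>] ..
  qed
  also have "\<dots> = (\<Sum>k<K + 2. \<Sum>r<N * d. cnj (w k r) * w k r)"
    by (subst sum.swap) (simp add: sum_blocks[OF d_pos])
  also have "\<dots> = (\<Sum>r<N * d. \<Sum>k<K + 2. w k r * cnj (w k r))"
    by (subst sum.swap) (simp add: mult.commute)
  also have "\<dots> = (\<Sum>r<N * d. \<Sum>k<K. w k r * cnj (w k r))"
    by (rule sum.cong[OF refl], rule sum_lessThan_vanishing_tail) (auto simp: w_vanish)
  also have "\<dots> = ctrace rho"
    unfolding ctrace_def using rho_carrier by (simp add: rho_gram)
  also have "\<dots> = 1" using density unfolding density_op_def by simp
  finally show "ctrace rho_sim = 1" .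
qed

lemma realisation_in_Q_set:
  assumes "\<And>a x. P a x = ctrace (Pm a * ctrl_unitary N d U x * rho * cadj (ctrl_unitary N d U x))"
  shows "P \<in> Q_set N (N + 1)"
  unfolding Q_set_def mem_Collect_eq D_def[symmetric]
proof (intro exI conjI allI impI)
  show "density_op (N * D) rho_sim" by (rule rho_sim_density)
  show "povm2 (N * D) Pm_sim" by (rule Pm_sim_povm)
  show "unitary_mat D (U_sim j b)" if "j < N" for j b using U_sim_unitary[OF that] .
  show "P a x = ctrace (Pm_sim a * ctrl_unitary N D U_sim x * rho_sim * cadj (ctrl_unitary N D U_sim x))" for a x
    unfolding assms ctrace_source ctrace_target ..
qed

end

theorem lemma3:
  fixes N d :: nat
  assumes "N \<ge> 1" and "d \<ge> 1"
  shows "Q_set N d \<subseteq> Q_set N (N + 1)"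
proof
  fix P assume "P \<in> Q_set N d"
  then obtain rho U Pm where density: "density_op (N * d) rho"
    and unitary: "\<forall>j<N. \<forall>b. unitary_mat d (U j b)" and povm: "povm2 (N * d) Pm"
    and P: "\<forall>a x. P a x = ctrace (Pm a * ctrl_unitary N d U x * rho * cadj (ctrl_unitary N d U x))"
    unfolding Q_set_def by blast
  have psd: "psd_mat (N * d) rho" using density unfolding density_op_def by simp
  then have "rho \<in> carrier_mat (N * d) (N * d)" unfolding psd_mat_def by simp
  with psd have "psd_form (N * d) (\<lambda>r r'. rho $$ (r, r'))" by (simp add: psd_mat_iff_psd_form)
  then obtain w where w: "\<forall>r<N * d. \<forall>r'<N * d. rho $$ (r, r') = (\<Sum>k<N * d. w k r * cnj (w k r'))"
    using psd_form_gram_factor by blast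
  interpret purified_realisation N d "N * d" rho U Pm "\<lambda>k r. if k < N * d then w k r else 0"
    by unfold_locales (use assms density unitary povm w in auto)
  show "P \<in> Q_set N (N + 1)" by (rule realisation_in_Q_set) (use P in blast)
qed

end
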